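(* Let $H$ be a tree-degenerate bipartite graph. Then for every graph $G$, $t_H(G)\geq [t_{K_2}(G)]^{e(H)}$ (i.e. $H$ satisfies Sidorenko's conjecture).
   Context: All graphs are finite and simple. For graphs $H,G$, $t_H(G)$ is the number of homomorphisms from $H$ to $G$ (maps $f:V(H)\to V(G)$ sending edges to edges) divided by $|G|^{|H|}$; thus $t_{K_2}(G)=2e(G)/|G|^2$. A bipartite graph $H$ is tree-degenerate if $V(H)$ can be partitioned into blocks $B_0,B_1,\dots,B_m$ such that $H$ is obtained by joining $B_1$ completely to $P(B_1):=B_0$ and, for each $2\le i\le m$, joining $B_i$ completely to a subset $P(B_i)$ of $B_{\gamma(i)}$ for some $1\le \gamma(i)\le i-1$, where for all $i\ge 2$, $|P(B_{\gamma(i)})|\le |P(B_i)|$, and $H$ has no other edges. *)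

theory Defs
  imports Complex_Main "HOL-Library.FuncSet"
begin

definition simple_graph :: "'a set \<Rightarrow> 'a set set \<Rightarrow> bool" where
  "simple_graph V E \<longleftrightarrow> finite V \<and>
     E \<subseteq> {e. \<exists>u v. e = {u, v} \<and> u \<noteq> v \<and> u \<in> V \<and> v \<in> V}"

definition hom_count :: "'a set \<Rightarrow> 'a set set \<Rightarrow> 'b set \<Rightarrow> 'b set set \<Rightarrow> nat" where
  "hom_count VH EH VG EG =
     card {f \<in> VH \<rightarrow>\<^sub>E VG. \<forall>u v. {u, v} \<in> EH \<longrightarrow> {f u, f v} \<in> EG}"

definition hom_density :: "'a set \<Rightarrow> 'a set set \<Rightarrow> 'b set \<Rightarrow> 'b set set \<Rightarrow> real" where
  "hom_density VH EH VG EG =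
     real (hom_count VH EH VG EG) / real (card VG) ^ card VH"

definition K2_V :: "nat set" where "K2_V = {0, 1}"
definition K2_E :: "nat set set" where "K2_E = {{0, 1}}"

definition bipartite :: "'a set \<Rightarrow> 'a set set \<Rightarrow> bool" where
  "bipartite V E \<longleftrightarrow> (\<exists>X Y. X \<inter> Y = {} \<and> X \<union> Y = V \<and>
      (\<forall>e\<in>E. \<exists>x\<in>X. \<exists>y\<in>Y. e = {x, y}))"

definition join_edges :: "'a set \<Rightarrow> 'a set \<Rightarrow> 'a set set" where
  "join_edges A B = {{u, v} | u v. u \<in> A \<and> v \<in> B}"

definition tree_degenerate :: "'a set \<Rightarrow> 'a set set \<Rightarrow> bool" where
  "tree_degenerate V E \<longleftrightarrow> bipartite V E \<and>
     (\<exists>(m::nat) (B::nat \<Rightarrow> 'a set) (P::nat \<Rightarrow> 'a set) (\<gamma>::nat \<Rightarrow> nat).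
        1 \<le> m \<and>
        (\<forall>i\<le>m. B i \<noteq> {}) \<and>
        (\<forall>i\<le>m. \<forall>j\<le>m. i \<noteq> j \<longrightarrow> B i \<inter> B j = {}) \<and>
        (\<Union>i\<le>m. B i) = V \<and>
        P 1 = B 0 \<and>
        (\<forall>i. 2 \<le> i \<and> i \<le> m \<longrightarrow>
            1 \<le> \<gamma> i \<and> \<gamma> i \<le> i - 1 \<and> P i \<subseteq> B (\<gamma> i) \<and>
            card (P (\<gamma> i)) \<le> card (P i)) \<and>
        E = (\<Union>i\<in>{1..m}. join_edges (B i) (P i)))"

end

theory Submission
  imports Defs "HOL-Analysis.Finite_Product_Measure"
begin

text \<open>An entropy argument. Write \<open>n = card V\<close> and \<open>p\<close> for the edge density of \<open>G\<close>. Map \<open>H\<close>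
  into \<open>G\<close> at random, block by block: the root block \<open>R\<close> goes to a uniform \<open>R\<close>-tuple in the
  neighbourhood of a degree-biased random vertex, and every further block \<open>B\<close> goes uniformly into the
  common neighbourhood of the image of its parent set \<open>P\<close>; this raises the entropy by \<open>card B\<close> times
  the expected log codegree of the image of \<open>P\<close>. The potential of a distribution of \<open>P\<close>-tuples
  combines expected log codegree and entropy. It equals \<open>ln p\<close> for the degree-biased vertex, and it
  does not decrease when passing from a \<open>P\<close>-tuple to a uniform \<open>Q\<close>-tuple in its common
  neighbourhood with \<open>card P \<le> card Q\<close>, which is what the size condition of tree-degeneracy
  guarantees along the tree. Hence every block raises the entropy by at least
  \<open>card B * (ln n + card P * ln p)\<close>. The final distribution is supported on homomorphisms, so
  \<open>ln hom(H, G) \<ge> card V(H) * ln n + e(H) * ln p\<close>.\<close>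

section \<open>Entropy of finite distributions\<close>

definition entropy :: "'x set \<Rightarrow> ('x \<Rightarrow> real) \<Rightarrow> real" where
  "entropy S p = - (\<Sum>x\<in>S. p x * ln (p x))"

definition distr_on :: "'x set \<Rightarrow> ('x \<Rightarrow> real) \<Rightarrow> bool" where
  "distr_on S p \<longleftrightarrow> (\<forall>x\<in>S. 0 \<le> p x) \<and> sum p S = 1"

definition uniform_on :: "'x set \<Rightarrow> 'x \<Rightarrow> real" where
  "uniform_on A x = (if x \<in> A then 1 / card A else 0)"

lemma sum_pos_ex_pos:
  fixes f :: "'a \<Rightarrow> real"
  shows "0 < sum f A \<Longrightarrow> \<exists>a\<in>A. 0 < f a"
  by (meson not_le sum_nonpos)

lemma neg_sum_xlnx_le_pos:
  fixes q :: "'x \<Rightarrow> real"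
  assumes "finite T" "S \<subseteq> T" "S \<noteq> {}" and q_pos: "\<forall>x\<in>S. 0 < q x"
  shows "- (\<Sum>x\<in>S. q x * ln (q x)) \<le> sum q S * (ln (card T) - ln (sum q S))"
proof -
  define s where "s = sum q S"
  have "finite S" using assms(1,2) by (rule finite_subset[rotated])
  then have s_pos: "0 < s" unfolding s_def using assms(3) q_pos by (intro sum_pos) auto
  have c_pos: "0 < real (card T)" using assms(1-3) by (auto simp: card_gt_0_iff)
  \<comment> \<open>Gibbs: \<open>ln y \<le> y - 1\<close> applied to \<open>y = s / (card T * q x)\<close>.\<close>
  have "(\<Sum>x\<in>S. q x * ln (s / (card T * q x))) \<le> (\<Sum>x\<in>S. s / card T - q x)"
  proof (rule sum_mono)
    fix x assume "x \<in> S"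
    then have "0 < q x" using q_pos by blast
    then have "q x * ln (s / (card T * q x)) \<le> q x * (s / (card T * q x) - 1)"
      using s_pos c_pos by (intro mult_left_mono ln_le_minus_one) auto
    also have "\<dots> = s / card T - q x"
      using \<open>0 < q x\<close> c_pos by (simp add: field_simps)
    finally show "q x * ln (s / (card T * q x)) \<le> s / card T - q x" .
  qed
  also have "\<dots> = card S * s / card T - s"
    by (simp add: sum_subtractf s_def)
  also have "\<dots> \<le> 0"
    using card_mono[OF assms(1,2)] s_pos c_pos by (simp add: field_simps)
  finally have "(\<Sum>x\<in>S. q x * ln (s / (card T * q x))) \<le> 0" .
  moreover have "(\<Sum>x\<in>S. q x * ln (s / (card T * q x)))
      = (\<Sum>x\<in>S. q x * (ln s - ln (card T)) - q x * ln (q x))"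
    using q_pos s_pos c_pos by (intro sum.cong) (auto simp: ln_div ln_mult algebra_simps)
  then have "(\<Sum>x\<in>S. q x * ln (s / (card T * q x)))
      = s * (ln s - ln (card T)) - (\<Sum>x\<in>S. q x * ln (q x))"
    by (simp add: sum_subtractf sum_distrib_right[symmetric] s_def)
  ultimately show ?thesis
    by (simp add: s_def algebra_simps)
qed

lemma neg_sum_xlnx_le:
  fixes q :: "'x \<Rightarrow> real"
  assumes "finite S" "finite T" "\<forall>x\<in>S. 0 \<le> q x" "\<forall>x\<in>S. q x \<noteq> 0 \<longrightarrow> x \<in> T"
  shows "- (\<Sum>x\<in>S. q x * ln (q x)) \<le> sum q S * (ln (card T) - ln (sum q S))"
proof -
  define S' where "S' = {x \<in> S. q x \<noteq> 0}"
  have "sum q S = sum q S'" and "(\<Sum>x\<in>S. q x * ln (q x)) = (\<Sum>x\<in>S'. q x * ln (q x))"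
    unfolding S'_def using assms(1) by (auto intro: sum.mono_neutral_right)
  moreover have "S' \<subseteq> T" "\<forall>x\<in>S'. 0 < q x"
    using assms(3,4) unfolding S'_def by force+
  ultimately show ?thesis
    using neg_sum_xlnx_le_pos[OF assms(2), of S' q] by (cases "S' = {}") auto
qed

lemma entropy_le_ln_card:
  assumes "finite S" "finite T" "distr_on S p" "\<forall>x\<in>S. p x \<noteq> 0 \<longrightarrow> x \<in> T"
  shows "entropy S p \<le> ln (card T)"
  using neg_sum_xlnx_le[of S T p] assms unfolding entropy_def distr_on_def by simp

lemma sum_uniform_on_comp:
  fixes f :: "real \<Rightarrow> real"
  assumes "finite X" "A \<subseteq> X" "f 0 = 0"
  shows "(\<Sum>x\<in>X. f (uniform_on A x)) = card A * f (1 / card A)"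
proof -
  have "(\<Sum>x\<in>X. f (uniform_on A x)) = (\<Sum>x\<in>X. if x \<in> A then f (1 / card A) else 0)"
    using assms(3) by (intro sum.cong) (auto simp: uniform_on_def)
  also have "\<dots> = (\<Sum>x\<in>{x \<in> X. x \<in> A}. f (1 / card A))"
    using assms(1) by (simp add: sum.inter_filter[symmetric])
  also have "{x \<in> X. x \<in> A} = A" using assms(2) by blast
  finally show ?thesis by simp
qed

lemma distr_on_uniform_on:
  assumes "finite X" "A \<subseteq> X" "A \<noteq> {}"
  shows "distr_on X (uniform_on A)"
  using sum_uniform_on_comp[of X A "\<lambda>u. u"] assms finite_subset[OF assms(2,1)]
  by (auto simp: distr_on_def uniform_on_def)

lemma entropy_uniform_extension:
  assumes "finite X" "\<forall>y\<in>Y. 0 \<le> \<tau> y" "\<forall>y\<in>Y. \<tau> y \<noteq> 0 \<longrightarrow> A y \<noteq> {} \<and> A y \<subseteq> X"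
  shows "- (\<Sum>y\<in>Y. \<Sum>x\<in>X. \<tau> y * uniform_on (A y) x * ln (\<tau> y * uniform_on (A y) x))
    = entropy Y \<tau> + (\<Sum>y\<in>Y. \<tau> y * ln (card (A y)))"
proof -
  have "(\<Sum>x\<in>X. \<tau> y * uniform_on (A y) x * ln (\<tau> y * uniform_on (A y) x))
      = \<tau> y * ln (\<tau> y) - \<tau> y * ln (card (A y))" if "y \<in> Y" for y
  proof (cases "\<tau> y = 0")
    case False
    then have A: "A y \<noteq> {}" "A y \<subseteq> X" using assms(3) that by auto
    then have "0 < card (A y)" using assms(1) by (meson card_gt_0_iff finite_subset)
    then show ?thesis
      using sum_uniform_on_comp[OF assms(1) A(2), of "\<lambda>u. \<tau> y * u * ln (\<tau> y * u)"] False
      by (simp add: ln_div algebra_simps)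
  qed simp
  then show ?thesis
    unfolding entropy_def by (simp add: sum_subtractf sum_negf)
qed

lemma joint_entropy_le:
  assumes "finite Y" "finite X" "\<forall>y\<in>Y. \<forall>x\<in>X. 0 \<le> \<pi> y x"
    and "\<forall>y\<in>Y. \<forall>x\<in>X. \<pi> y x \<noteq> 0 \<longrightarrow> y \<in> C x" "\<forall>x\<in>X. finite (C x)"
  shows "- (\<Sum>y\<in>Y. \<Sum>x\<in>X. \<pi> y x * ln (\<pi> y x))
    \<le> entropy X (\<lambda>x. \<Sum>y\<in>Y. \<pi> y x) + (\<Sum>x\<in>X. (\<Sum>y\<in>Y. \<pi> y x) * ln (card (C x)))"
proof -
  have "- (\<Sum>y\<in>Y. \<Sum>x\<in>X. \<pi> y x * ln (\<pi> y x)) = (\<Sum>x\<in>X. - (\<Sum>y\<in>Y. \<pi> y x * ln (\<pi> y x)))"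
    by (subst sum.swap) (simp add: sum_negf)
  also have "\<dots> \<le> (\<Sum>x\<in>X. (\<Sum>y\<in>Y. \<pi> y x) * (ln (card (C x)) - ln (\<Sum>y\<in>Y. \<pi> y x)))"
    using assms by (intro sum_mono neg_sum_xlnx_le) auto
  also have "\<dots> = entropy X (\<lambda>x. \<Sum>y\<in>Y. \<pi> y x) + (\<Sum>x\<in>X. (\<Sum>y\<in>Y. \<pi> y x) * ln (card (C x)))"
    unfolding entropy_def by (simp add: algebra_simps sum_subtractf sum_negf)
  finally show ?thesis .
qed

lemma restrict_merge_subset:
  assumes "R \<inter> B = {}"
  shows "Q \<subseteq> R \<Longrightarrow> restrict (merge R B (x, y)) Q = restrict x Q"
    and "Q \<subseteq> B \<Longrightarrow> restrict (merge R B (x, y)) Q = restrict y Q"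
  using assms by (auto simp: restrict_def merge_def fun_eq_iff)

lemma sum_PiE_Un:
  assumes "R \<inter> B = {}"
  shows "(\<Sum>z\<in>R \<union> B \<rightarrow>\<^sub>E S. g z) = (\<Sum>x\<in>R \<rightarrow>\<^sub>E S. \<Sum>y\<in>B \<rightarrow>\<^sub>E S. g (merge R B (x, y)))"
proof -
  have "bij_betw (merge R B) ((R \<rightarrow>\<^sub>E S) \<times> (B \<rightarrow>\<^sub>E S)) (R \<union> B \<rightarrow>\<^sub>E S)"
    by (rule bij_betw_byWitness[where f' = "\<lambda>z. (restrict z R, restrict z B)"])
      (use assms in \<open>auto simp: restrict_PiE_iff PiE_iff\<close>)
  then show ?thesis
    by (simp add: sum.reindex_bij_betw[symmetric] sum.cartesian_product)
qed

lemma uniform_on_PiE_merge: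
  assumes "R \<inter> B = {}" "finite R" "finite B" "x \<in> R \<rightarrow>\<^sub>E S" "y \<in> B \<rightarrow>\<^sub>E S"
  shows "uniform_on (R \<union> B \<rightarrow>\<^sub>E A) (merge R B (x, y))
    = uniform_on (R \<rightarrow>\<^sub>E A) x * uniform_on (B \<rightarrow>\<^sub>E A) y"
proof -
  have "merge R B (x, y) \<in> R \<union> B \<rightarrow>\<^sub>E A \<longleftrightarrow> x \<in> R \<rightarrow>\<^sub>E A \<and> y \<in> B \<rightarrow>\<^sub>E A"
    using assms unfolding PiE_cancel_merge[OF assms(1)] by (auto simp: PiE_def)
  moreover have "card (R \<union> B \<rightarrow>\<^sub>E A) = card (R \<rightarrow>\<^sub>E A) * card (B \<rightarrow>\<^sub>E A)"
    using assms by (simp add: card_PiE card_Un_disjoint power_add)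
  ultimately show ?thesis
    by (simp add: uniform_on_def)
qed

lemma marginal_uniform_on_PiE:
  assumes "Q \<subseteq> B" "finite B" "finite S" "A \<subseteq> S" "A \<noteq> {}"
  shows "(\<Sum>y\<in>B \<rightarrow>\<^sub>E S. if restrict y Q = w then uniform_on (B \<rightarrow>\<^sub>E A) y else 0)
    = uniform_on (Q \<rightarrow>\<^sub>E A) w"
proof -
  have BQ: "Q \<union> (B - Q) = B" "Q \<inter> (B - Q) = {}" and fin: "finite Q" "finite (B - Q)"
    using assms(1,2) finite_subset by auto
  have "(\<Sum>y\<in>B \<rightarrow>\<^sub>E S. if restrict y Q = w then uniform_on (B \<rightarrow>\<^sub>E A) y else 0)
      = (\<Sum>x\<in>Q \<rightarrow>\<^sub>E S. \<Sum>v\<in>B - Q \<rightarrow>\<^sub>E S.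
           if x = w then uniform_on (Q \<rightarrow>\<^sub>E A) x * uniform_on (B - Q \<rightarrow>\<^sub>E A) v else 0)"
    unfolding sum_PiE_Un[OF BQ(2), unfolded BQ(1)]
  proof (intro sum.cong refl)
    fix x v assume x: "x \<in> Q \<rightarrow>\<^sub>E S" and v: "v \<in> B - Q \<rightarrow>\<^sub>E S"
    have "restrict (merge Q (B - Q) (x, v)) Q = x" using BQ(2) x by simp
    then show "(if restrict (merge Q (B - Q) (x, v)) Q = w
                then uniform_on (B \<rightarrow>\<^sub>E A) (merge Q (B - Q) (x, v)) else 0)
        = (if x = w then uniform_on (Q \<rightarrow>\<^sub>E A) x * uniform_on (B - Q \<rightarrow>\<^sub>E A) v else 0)"
      using uniform_on_PiE_merge[OF BQ(2) fin x v, of A] BQ(1) by auto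
  qed
  also have "\<dots> = (\<Sum>x\<in>Q \<rightarrow>\<^sub>E S. if x = w then uniform_on (Q \<rightarrow>\<^sub>E A) x else 0)"
    using distr_on_uniform_on[of "B - Q \<rightarrow>\<^sub>E S" "B - Q \<rightarrow>\<^sub>E A"] fin assms(3-5)
    by (intro sum.cong refl)
      (auto simp: distr_on_def sum_distrib_left[symmetric] finite_PiE PiE_mono PiE_eq_empty_iff)
  also have "\<dots> = uniform_on (Q \<rightarrow>\<^sub>E A) w"
    using PiE_mono[OF assms(4)] fin assms(3) by (auto simp: sum.delta finite_PiE uniform_on_def)
  finally show ?thesis .
qed

section \<open>Block sequences\<close>

text \<open>Blocks are added one at a time to the vertex set \<open>R\<close>, each joined completely to a nonempty
  parent set \<open>P\<close> of vertices already present. The last condition is the size condition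
  \<open>card (P (B \<gamma>(i))) \<le> card (P (B i))\<close> of tree-degeneracy.\<close>
fun block_seq :: "'a set \<Rightarrow> ('a set \<times> 'a set) list \<Rightarrow> bool" where
  "block_seq R [] \<longleftrightarrow> finite R"
| "block_seq R ((B, P) # bs) \<longleftrightarrow> finite R \<and> finite B \<and> R \<inter> B = {} \<and> P \<noteq> {} \<and> P \<subseteq> R \<and>
     (\<forall>(B', P')\<in>set bs. P' \<subseteq> R \<union> B \<longrightarrow> P' \<subseteq> R \<or> (P' \<subseteq> B \<and> card P \<le> card P')) \<and>
     block_seq (R \<union> B) bs"

fun block_vertices :: "('a set \<times> 'a set) list \<Rightarrow> 'a set" where
  "block_vertices [] = {}"
| "block_vertices ((B, P) # bs) = B \<union> block_vertices bs"

fun block_edges :: "('a set \<times> 'a set) list \<Rightarrow> 'a set set" where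
  "block_edges [] = {}"
| "block_edges ((B, P) # bs) = join_edges B P \<union> block_edges bs"

lemma block_seq_parents_nonempty: "block_seq R bs \<Longrightarrow> (B, P) \<in> set bs \<Longrightarrow> P \<noteq> {}"
  by (induction R bs rule: block_seq.induct) auto

lemma block_vertices_disjoint:
  "block_seq R bs \<Longrightarrow> finite (block_vertices bs) \<and> R \<inter> block_vertices bs = {}"
  by (induction R bs rule: block_seq.induct) auto

lemma block_edges_meet_vertices: "e \<in> block_edges bs \<Longrightarrow> e \<inter> block_vertices bs \<noteq> {}"
  by (induction bs rule: block_edges.induct) (auto simp: join_edges_def)

lemma join_edges_image: "join_edges B P = (\<lambda>(u, v). {u, v}) ` (B \<times> P)"
  unfolding join_edges_def by auto

lemma card_join_edges:
  assumes "finite B" "finite P" "B \<inter> P = {}"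
  shows "card (join_edges B P) = card B * card P"
proof -
  have "inj_on (\<lambda>(u, v). {u, v}) (B \<times> P)"
    using assms(3) by (auto simp: inj_on_def doubleton_eq_iff)
  then show ?thesis
    by (simp add: join_edges_image card_image card_cartesian_product)
qed

lemma finite_block_edges: "block_seq R bs \<Longrightarrow> finite (block_edges bs)"
  by (induction R bs rule: block_seq.induct) (auto simp: join_edges_image dest: finite_subset)

lemma card_block_vertices_Cons:
  assumes "block_seq R ((B, P) # bs)"
  shows "card (block_vertices ((B, P) # bs)) = card B + card (block_vertices bs)"
  using assms block_vertices_disjoint[of "R \<union> B" bs] by (auto intro: card_Un_disjoint)

lemma card_block_edges_Cons:
  assumes "block_seq R ((B, P) # bs)"
  shows "card (block_edges ((B, P) # bs)) = card B * card P + card (block_edges bs)"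
proof -
  have fin: "finite B" "finite P" and "B \<inter> P = {}" "P \<subseteq> R" and bs: "block_seq (R \<union> B) bs"
    using assms finite_subset by auto
  have "join_edges B P \<inter> block_edges bs = {}"
    using block_edges_meet_vertices block_vertices_disjoint[OF bs] \<open>P \<subseteq> R\<close>
    by (fastforce simp: join_edges_def)
  then show ?thesis
    using card_join_edges[OF fin \<open>B \<inter> P = {}\<close>] finite_block_edges[OF bs] fin
    by (simp add: card_Un_disjoint join_edges_image)
qed

section \<open>Distributions on vertex tuples\<close>

lemma normalized_potential_le:
  fixes t s Lt Ht Ls Hs N :: real
  assumes "0 < t" "t \<le> s" "Ht + s * Lt \<le> Hs + t * Ls" "Hs \<le> s * N" "Ht \<le> t * N"
  shows "(Lt + Ht / t - 2 * N) / t \<le> (Ls + Hs / s - 2 * N) / s"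
proof -
  have "0 < s" using assms by linarith
  have "t\<^sup>2 * (s * Ls + Hs - 2 * s * N) - s\<^sup>2 * (t * Lt + Ht - 2 * t * N)
     = s * t * (Hs + t * Ls - Ht - s * Lt) + t * (s - t) * (s * N - Hs) + s * (s - t) * (t * N - Ht)"
    by (simp add: algebra_simps power2_eq_square)
  also have "\<dots> \<ge> 0" using assms \<open>0 < s\<close> by simp
  finally have "s\<^sup>2 * (t * Lt + Ht - 2 * t * N) \<le> t\<^sup>2 * (s * Ls + Hs - 2 * s * N)" by simp
  then show ?thesis
    using assms(1) \<open>0 < s\<close> by (simp add: field_simps power2_eq_square)
qed

lemma root_block_arith:
  fixes r b L H N c :: real
  assumes "0 < r" "r \<le> b" "c \<le> (L + H / r - 2 * N) / r" "H \<le> r * N"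
  shows "(r + b) * N + r * b * c \<le> H + b * L"
proof -
  have "b * (r * c) \<le> b * (L + H / r - 2 * N)"
    using assms by (intro mult_left_mono) (auto simp: le_divide_eq mult.commute)
  moreover have "0 \<le> (b - r) * (N - H / r)"
    using assms by (simp add: divide_le_eq mult.commute)
  moreover have "H + b * L - ((r + b) * N + b * (L + H / r - 2 * N)) = (b - r) * (N - H / r)"
    using assms(1) by (simp add: field_simps)
  ultimately show ?thesis by (simp add: algebra_simps)
qed

locale host_graph =
  fixes V :: "'v set" and E :: "'v set set"
  assumes finite_V: "finite V" and V_nonempty: "V \<noteq> {}"
begin

definition common_nbhd :: "('i \<Rightarrow> 'v) \<Rightarrow> 'i set \<Rightarrow> 'v set" where
  "common_nbhd x P = {v \<in> V. \<forall>j\<in>P. {v, x j} \<in> E}"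

definition codeg :: "('i \<Rightarrow> 'v) \<Rightarrow> 'i set \<Rightarrow> real" where
  "codeg x P = real (card (common_nbhd x P))"

definition mean_log_codeg :: "'i set \<Rightarrow> (('i \<Rightarrow> 'v) \<Rightarrow> real) \<Rightarrow> real" where
  "mean_log_codeg P \<rho> = (\<Sum>x\<in>P \<rightarrow>\<^sub>E V. \<rho> x * ln (codeg x P))"

text \<open>For the uniform distribution on the \<open>P\<close>-tuples of a quasirandom graph of edge density \<open>p\<close>,
  the potential is \<open>ln p\<close>.\<close>
definition potential :: "'i set \<Rightarrow> (('i \<Rightarrow> 'v) \<Rightarrow> real) \<Rightarrow> real" where
  "potential P \<rho> =
     (mean_log_codeg P \<rho> + entropy (P \<rightarrow>\<^sub>E V) \<rho> / card P - 2 * ln (card V)) / card P"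

definition codeg_supported :: "'i set \<Rightarrow> 'i set \<Rightarrow> (('i \<Rightarrow> 'v) \<Rightarrow> real) \<Rightarrow> bool" where
  "codeg_supported R P \<rho> \<longleftrightarrow> (\<forall>x\<in>R \<rightarrow>\<^sub>E V. 0 < \<rho> x \<longrightarrow> 0 < codeg x P)"

definition nbhd_step :: "(('i \<Rightarrow> 'v) \<Rightarrow> real) \<Rightarrow> 'i set \<Rightarrow> 'j set \<Rightarrow> ('j \<Rightarrow> 'v) \<Rightarrow> real" where
  "nbhd_step \<tau> P Q w = (\<Sum>y\<in>P \<rightarrow>\<^sub>E V. \<tau> y * uniform_on (Q \<rightarrow>\<^sub>E common_nbhd y P) w)"

lemma common_nbhd_subset: "common_nbhd x P \<subseteq> V"
  unfolding common_nbhd_def by blast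

lemma finite_common_nbhd: "finite (common_nbhd x P)"
  using finite_subset[OF common_nbhd_subset finite_V] .

lemma codeg_pos_iff: "0 < codeg x P \<longleftrightarrow> common_nbhd x P \<noteq> {}"
  unfolding codeg_def using finite_common_nbhd[of x P] by (simp add: card_gt_0_iff)

lemma common_nbhd_restrict: "P \<subseteq> R \<Longrightarrow> common_nbhd (restrict x R) P = common_nbhd x P"
  unfolding common_nbhd_def by (auto simp: subset_iff)

lemma codeg_restrict: "P \<subseteq> R \<Longrightarrow> codeg (restrict x R) P = codeg x P"
  unfolding codeg_def by (simp add: common_nbhd_restrict)

lemma PiE_common_nbhd_subset: "Q \<rightarrow>\<^sub>E common_nbhd y P \<subseteq> Q \<rightarrow>\<^sub>E V"
  by (rule PiE_mono) (rule common_nbhd_subset)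

lemma ln_card_PiE_common_nbhd:
  "finite Q \<Longrightarrow> ln (card (Q \<rightarrow>\<^sub>E common_nbhd y P)) = card Q * ln (codeg y P)"
  unfolding codeg_def by (simp add: card_PiE ln_realpow)

lemma PiE_common_nbhd_sym:
  "x \<in> Q \<rightarrow>\<^sub>E V \<Longrightarrow> y \<in> P \<rightarrow>\<^sub>E V \<Longrightarrow> x \<in> Q \<rightarrow>\<^sub>E common_nbhd y P \<longleftrightarrow> y \<in> P \<rightarrow>\<^sub>E common_nbhd x Q"
  unfolding common_nbhd_def by (auto simp: PiE_iff insert_commute)

lemma common_nbhd_nonempty_if_supported:
  assumes "distr_on (R \<rightarrow>\<^sub>E V) \<rho>" "codeg_supported R P \<rho>" "x \<in> R \<rightarrow>\<^sub>E V" "\<rho> x \<noteq> 0"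
  shows "common_nbhd x P \<noteq> {}"
  using assms by (force simp: distr_on_def codeg_supported_def codeg_pos_iff)

lemma distr_uniform_PiE_common_nbhd:
  "finite Q \<Longrightarrow> common_nbhd y P \<noteq> {} \<Longrightarrow> distr_on (Q \<rightarrow>\<^sub>E V) (uniform_on (Q \<rightarrow>\<^sub>E common_nbhd y P))"
  using finite_V
  by (intro distr_on_uniform_on PiE_common_nbhd_subset) (auto simp: finite_PiE PiE_eq_empty_iff)

lemma entropy_tuples_le:
  assumes "finite P" "distr_on (P \<rightarrow>\<^sub>E V) \<rho>"
  shows "entropy (P \<rightarrow>\<^sub>E V) \<rho> \<le> card P * ln (card V)"
  using entropy_le_ln_card[of "P \<rightarrow>\<^sub>E V" "P \<rightarrow>\<^sub>E V" \<rho>] assms finite_V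
  by (simp add: finite_PiE card_PiE ln_realpow)

lemma mean_log_codeg_ge_potential:
  assumes "finite P" "P \<noteq> {}" "distr_on (P \<rightarrow>\<^sub>E V) \<rho>"
  shows "ln (card V) + card P * potential P \<rho> \<le> mean_log_codeg P \<rho>"
proof -
  have "0 < real (card P)" using assms by (simp add: card_gt_0_iff)
  then show ?thesis
    using entropy_tuples_le[OF assms(1,3)] by (simp add: potential_def field_simps)
qed

lemma distr_nbhd_step:
  assumes "finite P" "finite Q" "distr_on (P \<rightarrow>\<^sub>E V) \<tau>" "codeg_supported P P \<tau>"
  shows "distr_on (Q \<rightarrow>\<^sub>E V) (nbhd_step \<tau> P Q)"
proof -
  have "sum (uniform_on (Q \<rightarrow>\<^sub>E common_nbhd y P)) (Q \<rightarrow>\<^sub>E V) = 1"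
    if "y \<in> P \<rightarrow>\<^sub>E V" "\<tau> y \<noteq> 0" for y
    using distr_uniform_PiE_common_nbhd[OF assms(2) common_nbhd_nonempty_if_supported[OF assms(3,4) that]]
    by (simp add: distr_on_def)
  then have "sum (nbhd_step \<tau> P Q) (Q \<rightarrow>\<^sub>E V)
      = (\<Sum>y\<in>P \<rightarrow>\<^sub>E V. \<tau> y * sum (uniform_on (Q \<rightarrow>\<^sub>E common_nbhd y P)) (Q \<rightarrow>\<^sub>E V))"
    unfolding nbhd_step_def by (subst sum.swap) (simp add: sum_distrib_left)
  also have "\<dots> = sum \<tau> (P \<rightarrow>\<^sub>E V)"
    using \<open>\<And>y. _ \<Longrightarrow> _ \<Longrightarrow> _ = 1\<close> by (intro sum.cong refl) force
  finally have "sum (nbhd_step \<tau> P Q) (Q \<rightarrow>\<^sub>E V) = sum \<tau> (P \<rightarrow>\<^sub>E V)" .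
  moreover have "0 \<le> nbhd_step \<tau> P Q w" for w
    using assms(3) unfolding nbhd_step_def distr_on_def
    by (intro sum_nonneg mult_nonneg_nonneg) (auto simp: uniform_on_def)
  ultimately show ?thesis using assms(3) by (simp add: distr_on_def)
qed

lemma codeg_supported_nbhd_step:
  assumes "P \<noteq> {}"
  shows "codeg_supported Q Q (nbhd_step \<tau> P Q)"
  unfolding codeg_supported_def
proof (intro ballI impI)
  fix w assume w: "w \<in> Q \<rightarrow>\<^sub>E V" and "0 < nbhd_step \<tau> P Q w"
  then obtain y where y: "y \<in> P \<rightarrow>\<^sub>E V" and "0 < \<tau> y * uniform_on (Q \<rightarrow>\<^sub>E common_nbhd y P) w"
    unfolding nbhd_step_def by (blast dest: sum_pos_ex_pos)
  then have "w \<in> Q \<rightarrow>\<^sub>E common_nbhd y P"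
    by (auto simp: uniform_on_def split: if_splits)
  then have "y \<in> P \<rightarrow>\<^sub>E common_nbhd w Q" using PiE_common_nbhd_sym[OF w y] by blast
  then show "0 < codeg w Q" using assms by (auto simp: codeg_pos_iff)
qed

text \<open>The left side is the entropy of the joint distribution of the \<open>P\<close>-tuple \<open>y\<close> and the
  \<open>Q\<close>-tuple \<open>w\<close> (condition on \<open>y\<close>); the right side bounds it by conditioning on \<open>w\<close>, given which
  \<open>y\<close> ranges over \<open>P \<rightarrow>\<^sub>E common_nbhd w Q\<close>.\<close>
lemma entropy_nbhd_step_ge:
  assumes "finite P" "finite Q" and \<tau>: "distr_on (P \<rightarrow>\<^sub>E V) \<tau>" "codeg_supported P P \<tau>"
  shows "entropy (P \<rightarrow>\<^sub>E V) \<tau> + card Q * mean_log_codeg P \<tau>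
    \<le> entropy (Q \<rightarrow>\<^sub>E V) (nbhd_step \<tau> P Q) + card P * mean_log_codeg Q (nbhd_step \<tau> P Q)"
proof -
  define \<pi> where "\<pi> y w = \<tau> y * uniform_on (Q \<rightarrow>\<^sub>E common_nbhd y P) w" for y w
  let ?H = "- (\<Sum>y\<in>P \<rightarrow>\<^sub>E V. \<Sum>w\<in>Q \<rightarrow>\<^sub>E V. \<pi> y w * ln (\<pi> y w))"
  have fin: "finite (P \<rightarrow>\<^sub>E V)" "finite (Q \<rightarrow>\<^sub>E V)"
    using assms(1,2) finite_V by (auto simp: finite_PiE)
  have \<tau>_nonneg: "\<forall>y\<in>P \<rightarrow>\<^sub>E V. 0 \<le> \<tau> y" using \<tau>(1) by (simp add: distr_on_def)
  have "?H = entropy (P \<rightarrow>\<^sub>E V) \<tau> + (\<Sum>y\<in>P \<rightarrow>\<^sub>E V. \<tau> y * ln (card (Q \<rightarrow>\<^sub>E common_nbhd y P)))"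
    unfolding \<pi>_def
  proof (rule entropy_uniform_extension[OF fin(2) \<tau>_nonneg], intro ballI impI)
    fix y assume "y \<in> P \<rightarrow>\<^sub>E V" "\<tau> y \<noteq> 0"
    then show "Q \<rightarrow>\<^sub>E common_nbhd y P \<noteq> {} \<and> Q \<rightarrow>\<^sub>E common_nbhd y P \<subseteq> Q \<rightarrow>\<^sub>E V"
      using common_nbhd_nonempty_if_supported[OF \<tau>]
      by (simp add: PiE_eq_empty_iff PiE_common_nbhd_subset)
  qed
  also have "\<dots> = entropy (P \<rightarrow>\<^sub>E V) \<tau> + card Q * mean_log_codeg P \<tau>"
    unfolding mean_log_codeg_def ln_card_PiE_common_nbhd[OF assms(2)]
    by (simp add: sum_distrib_left algebra_simps)
  finally have H_eq: "?H = entropy (P \<rightarrow>\<^sub>E V) \<tau> + card Q * mean_log_codeg P \<tau>" .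
  have \<pi>_nonneg: "\<forall>y\<in>P \<rightarrow>\<^sub>E V. \<forall>w\<in>Q \<rightarrow>\<^sub>E V. 0 \<le> \<pi> y w"
    using \<tau>_nonneg by (simp add: \<pi>_def uniform_on_def)
  have \<pi>_supp: "\<forall>y\<in>P \<rightarrow>\<^sub>E V. \<forall>w\<in>Q \<rightarrow>\<^sub>E V. \<pi> y w \<noteq> 0 \<longrightarrow> y \<in> P \<rightarrow>\<^sub>E common_nbhd w Q"
  proof (intro ballI impI)
    fix y w assume y: "y \<in> P \<rightarrow>\<^sub>E V" and w: "w \<in> Q \<rightarrow>\<^sub>E V" and "\<pi> y w \<noteq> 0"
    then have "w \<in> Q \<rightarrow>\<^sub>E common_nbhd y P" by (simp add: \<pi>_def uniform_on_def split: if_splits)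
    then show "y \<in> P \<rightarrow>\<^sub>E common_nbhd w Q" using PiE_common_nbhd_sym[OF w y] by blast
  qed
  have "?H \<le> entropy (Q \<rightarrow>\<^sub>E V) (nbhd_step \<tau> P Q)
      + (\<Sum>w\<in>Q \<rightarrow>\<^sub>E V. nbhd_step \<tau> P Q w * ln (card (P \<rightarrow>\<^sub>E common_nbhd w Q)))"
    unfolding nbhd_step_def \<pi>_def[symmetric]
    by (rule joint_entropy_le[OF fin \<pi>_nonneg \<pi>_supp])
      (simp add: finite_PiE assms(1) finite_common_nbhd)
  also have "\<dots> = entropy (Q \<rightarrow>\<^sub>E V) (nbhd_step \<tau> P Q) + card P * mean_log_codeg Q (nbhd_step \<tau> P Q)"
    unfolding mean_log_codeg_def ln_card_PiE_common_nbhd[OF assms(1)]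
    by (simp add: sum_distrib_left algebra_simps)
  finally show ?thesis using H_eq by simp
qed

lemma potential_nbhd_step_mono:
  assumes "finite P" "finite Q" "P \<noteq> {}" "card P \<le> card Q"
    and \<tau>: "distr_on (P \<rightarrow>\<^sub>E V) \<tau>" "codeg_supported P P \<tau>"
  shows "potential P \<tau> \<le> potential Q (nbhd_step \<tau> P Q)"
  unfolding potential_def
  using entropy_nbhd_step_ge[OF assms(1,2) \<tau>] entropy_tuples_le[OF assms(1) \<tau>(1)]
    entropy_tuples_le[OF assms(2) distr_nbhd_step[OF assms(1,2) \<tau>]] assms(1,3,4)
  by (intro normalized_potential_le) (auto simp: card_gt_0_iff)

definition marginal :: "'i set \<Rightarrow> 'i set \<Rightarrow> (('i \<Rightarrow> 'v) \<Rightarrow> real) \<Rightarrow> ('i \<Rightarrow> 'v) \<Rightarrow> real" where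
  "marginal R Q \<rho> w = (\<Sum>x\<in>R \<rightarrow>\<^sub>E V. if restrict x Q = w then \<rho> x else 0)"

lemma sum_marginal:
  assumes "finite R" "Q \<subseteq> R"
  shows "(\<Sum>w\<in>Q \<rightarrow>\<^sub>E V. marginal R Q \<rho> w * g w) = (\<Sum>x\<in>R \<rightarrow>\<^sub>E V. \<rho> x * g (restrict x Q))"
proof -
  have "finite (Q \<rightarrow>\<^sub>E V)" using assms finite_V finite_subset by (blast intro: finite_PiE)
  then have "(\<Sum>w\<in>Q \<rightarrow>\<^sub>E V. if restrict x Q = w then \<rho> x * g w else 0) = \<rho> x * g (restrict x Q)"
    if "x \<in> R \<rightarrow>\<^sub>E V" for x
    using that assms(2) by (simp add: sum.delta PiE_iff subset_iff)
  then show ?thesis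
    unfolding marginal_def sum_distrib_right
    by (subst sum.swap) (auto intro: sum.cong simp: if_distrib[of "\<lambda>u. u * g _"] cong: if_cong)
qed

lemma distr_marginal:
  assumes "finite R" "Q \<subseteq> R" "distr_on (R \<rightarrow>\<^sub>E V) \<rho>"
  shows "distr_on (Q \<rightarrow>\<^sub>E V) (marginal R Q \<rho>)"
  using sum_marginal[OF assms(1,2), of \<rho> "\<lambda>_. 1"] assms(3)
  by (auto simp: distr_on_def marginal_def intro: sum_nonneg)

lemma mean_log_codeg_marginal:
  assumes "finite R" "Q \<subseteq> R"
  shows "mean_log_codeg Q (marginal R Q \<rho>) = (\<Sum>x\<in>R \<rightarrow>\<^sub>E V. \<rho> x * ln (codeg x Q))"
  unfolding mean_log_codeg_def sum_marginal[OF assms] by (simp add: codeg_restrict)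

lemma codeg_supported_of_marginal:
  assumes "finite R" "P \<subseteq> R" "distr_on (R \<rightarrow>\<^sub>E V) \<rho>" "codeg_supported P P (marginal R P \<rho>)"
  shows "codeg_supported R P \<rho>"
  unfolding codeg_supported_def
proof (intro ballI impI)
  fix x assume x: "x \<in> R \<rightarrow>\<^sub>E V" "0 < \<rho> x"
  have "\<rho> x \<le> marginal R P \<rho> (restrict x P)"
    unfolding marginal_def using assms(1,3) x finite_V
    by (intro member_le_sum[of x, where f = "\<lambda>x'. if restrict x' P = restrict x P then \<rho> x' else 0",
          simplified]) (auto simp: distr_on_def finite_PiE)
  moreover have "restrict x P \<in> P \<rightarrow>\<^sub>E V" using x(1) assms(2) by (auto simp: PiE_iff)
  ultimately have "0 < codeg (restrict x P) P"
    using assms(4) x(2) unfolding codeg_supported_def by force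
  then show "0 < codeg x P" by (simp add: codeg_restrict)
qed

lemma marginal_nbhd_step:
  assumes "finite Q" "Q' \<subseteq> Q" "distr_on (P \<rightarrow>\<^sub>E V) \<tau>" "codeg_supported P P \<tau>"
  shows "marginal Q Q' (nbhd_step \<tau> P Q) = nbhd_step \<tau> P Q'"
proof
  fix w
  have fibre: "\<tau> y * (\<Sum>x\<in>Q \<rightarrow>\<^sub>E V. if restrict x Q' = w then uniform_on (Q \<rightarrow>\<^sub>E common_nbhd y P) x else 0)
      = \<tau> y * uniform_on (Q' \<rightarrow>\<^sub>E common_nbhd y P) w" if "y \<in> P \<rightarrow>\<^sub>E V" for y
  proof (cases "\<tau> y = 0")
    case False
    then have "common_nbhd y P \<noteq> {}"
      using common_nbhd_nonempty_if_supported[OF assms(3,4) that] by simp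
    then show ?thesis
      using marginal_uniform_on_PiE[OF assms(2,1) finite_V common_nbhd_subset, of y P w] by simp
  qed simp
  have "marginal Q Q' (nbhd_step \<tau> P Q) w = (\<Sum>x\<in>Q \<rightarrow>\<^sub>E V. \<Sum>y\<in>P \<rightarrow>\<^sub>E V.
      \<tau> y * (if restrict x Q' = w then uniform_on (Q \<rightarrow>\<^sub>E common_nbhd y P) x else 0))"
    unfolding marginal_def nbhd_step_def by (intro sum.cong refl) auto
  also have "\<dots> = (\<Sum>y\<in>P \<rightarrow>\<^sub>E V. \<tau> y *
      (\<Sum>x\<in>Q \<rightarrow>\<^sub>E V. if restrict x Q' = w then uniform_on (Q \<rightarrow>\<^sub>E common_nbhd y P) x else 0))"
    by (subst sum.swap) (simp add: sum_distrib_left)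
  also have "\<dots> = nbhd_step \<tau> P Q' w"
    unfolding nbhd_step_def using fibre by (rule sum.cong[OF refl])
  finally show "marginal Q Q' (nbhd_step \<tau> P Q) w = nbhd_step \<tau> P Q' w" .
qed

definition preserves_edges :: "'i set set \<Rightarrow> ('i \<Rightarrow> 'v) \<Rightarrow> bool" where
  "preserves_edges EH \<phi> \<longleftrightarrow> (\<forall>u v. {u, v} \<in> EH \<longrightarrow> {\<phi> u, \<phi> v} \<in> E)"

lemma preserves_edges_Un [simp]:
  "preserves_edges (EH \<union> EH') \<phi> \<longleftrightarrow> preserves_edges EH \<phi> \<and> preserves_edges EH' \<phi>"
  unfolding preserves_edges_def by blast

lemma preserves_join_edges:
  "preserves_edges (join_edges B P) \<phi> \<longleftrightarrow> (\<forall>i\<in>B. \<forall>j\<in>P. {\<phi> i, \<phi> j} \<in> E)"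
  unfolding preserves_edges_def join_edges_def by (auto simp: doubleton_eq_iff insert_commute)

lemma hom_density_ge_if_entropy_ge:
  assumes "finite VH" "distr_on (VH \<rightarrow>\<^sub>E V) \<mu>" "\<forall>\<phi>\<in>VH \<rightarrow>\<^sub>E V. 0 < \<mu> \<phi> \<longrightarrow> preserves_edges EH \<phi>"
    and "0 < p" "card VH * ln (card V) + card EH * ln p \<le> entropy (VH \<rightarrow>\<^sub>E V) \<mu>"
  shows "p ^ card EH \<le> hom_density VH EH V E"
proof -
  let ?homs = "{\<phi> \<in> VH \<rightarrow>\<^sub>E V. preserves_edges EH \<phi>}"
  have fin: "finite (VH \<rightarrow>\<^sub>E V)" using assms(1) finite_V by (simp add: finite_PiE)
  have "entropy (VH \<rightarrow>\<^sub>E V) \<mu> \<le> ln (card ?homs)"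
    using assms(2,3) fin by (intro entropy_le_ln_card) (auto simp: distr_on_def less_le)
  moreover have "0 < card ?homs"
  proof -
    obtain \<phi> where "\<phi> \<in> VH \<rightarrow>\<^sub>E V" "0 < \<mu> \<phi>"
      using sum_pos_ex_pos[of \<mu> "VH \<rightarrow>\<^sub>E V"] assms(2) by (auto simp: distr_on_def)
    then show ?thesis using assms(3) fin by (auto simp: card_gt_0_iff)
  qed
  moreover have "ln (real (card V) ^ card VH * p ^ card EH) = card VH * ln (card V) + card EH * ln p"
    using assms(4) finite_V V_nonempty by (simp add: ln_mult ln_realpow)
  ultimately have "real (card V) ^ card VH * p ^ card EH \<le> card ?homs"
    using assms(4,5) finite_V V_nonempty by (subst ln_le_cancel_iff[symmetric]) (auto simp: card_gt_0_iff)
  then show ?thesis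
    using finite_V V_nonempty
    by (simp add: hom_density_def hom_count_def preserves_edges_def le_divide_eq card_gt_0_iff mult.commute)
qed

definition extend :: "'i set \<Rightarrow> 'i set \<Rightarrow> 'i set \<Rightarrow> (('i \<Rightarrow> 'v) \<Rightarrow> real) \<Rightarrow> ('i \<Rightarrow> 'v) \<Rightarrow> real" where
  "extend R B P \<rho> z = \<rho> (restrict z R) * uniform_on (B \<rightarrow>\<^sub>E common_nbhd z P) (restrict z B)"

lemma extend_pos:
  "0 < extend R B P \<rho> z \<Longrightarrow> 0 < \<rho> (restrict z R) \<and> restrict z B \<in> B \<rightarrow>\<^sub>E common_nbhd z P"
  unfolding extend_def uniform_on_def by (auto simp: zero_less_mult_iff split: if_splits)

context
  fixes R B P :: "'i set" and \<rho> :: "('i \<Rightarrow> 'v) \<Rightarrow> real"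
  assumes disjoint: "R \<inter> B = {}" and finite_RB: "finite R" "finite B" and parent: "P \<subseteq> R"
    and \<rho>: "distr_on (R \<rightarrow>\<^sub>E V) \<rho>" "codeg_supported R P \<rho>"
begin

lemma extend_merge:
  assumes "x \<in> R \<rightarrow>\<^sub>E V" "y \<in> B \<rightarrow>\<^sub>E V"
  shows "extend R B P \<rho> (merge R B (x, y)) = \<rho> x * uniform_on (B \<rightarrow>\<^sub>E common_nbhd x P) y"
proof -
  have "common_nbhd (merge R B (x, y)) P = common_nbhd (restrict (merge R B (x, y)) R) P"
    using parent by (simp add: common_nbhd_restrict)
  then show ?thesis
    using assms disjoint by (simp add: extend_def common_nbhd_restrict[OF parent])
qed

lemma uniform_nbhd_distr:
  "x \<in> R \<rightarrow>\<^sub>E V \<Longrightarrow> \<rho> x \<noteq> 0 \<Longrightarrow> distr_on (B \<rightarrow>\<^sub>E V) (uniform_on (B \<rightarrow>\<^sub>E common_nbhd x P))"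
  using distr_uniform_PiE_common_nbhd[OF finite_RB(2) common_nbhd_nonempty_if_supported[OF \<rho>]] .

lemma sum_extend:
  "(\<Sum>z\<in>R \<union> B \<rightarrow>\<^sub>E V. g z * extend R B P \<rho> z)
    = (\<Sum>x\<in>R \<rightarrow>\<^sub>E V. \<rho> x * (\<Sum>y\<in>B \<rightarrow>\<^sub>E V. g (merge R B (x, y)) * uniform_on (B \<rightarrow>\<^sub>E common_nbhd x P) y))"
  unfolding sum_PiE_Un[OF disjoint] sum_distrib_left
  by (intro sum.cong refl) (simp add: extend_merge algebra_simps)

lemma distr_extend: "distr_on (R \<union> B \<rightarrow>\<^sub>E V) (extend R B P \<rho>)"
proof -
  have "(\<Sum>z\<in>R \<union> B \<rightarrow>\<^sub>E V. 1 * extend R B P \<rho> z) = (\<Sum>x\<in>R \<rightarrow>\<^sub>E V. \<rho> x)"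
    unfolding sum_extend using uniform_nbhd_distr by (intro sum.cong refl) (force simp: distr_on_def)
  moreover have "0 \<le> extend R B P \<rho> z" if "z \<in> R \<union> B \<rightarrow>\<^sub>E V" for z
    using \<rho>(1) that by (auto simp: extend_def uniform_on_def distr_on_def PiE_iff)
  ultimately show ?thesis using \<rho>(1) by (simp add: distr_on_def)
qed

lemma entropy_extend:
  "entropy (R \<union> B \<rightarrow>\<^sub>E V) (extend R B P \<rho>)
    = entropy (R \<rightarrow>\<^sub>E V) \<rho> + card B * mean_log_codeg P (marginal R P \<rho>)"
proof -
  let ?u = "\<lambda>x. uniform_on (B \<rightarrow>\<^sub>E common_nbhd x P)"
  have "entropy (R \<union> B \<rightarrow>\<^sub>E V) (extend R B P \<rho>)
      = - (\<Sum>x\<in>R \<rightarrow>\<^sub>E V. \<Sum>y\<in>B \<rightarrow>\<^sub>E V. \<rho> x * ?u x y * ln (\<rho> x * ?u x y))"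
    unfolding entropy_def sum_PiE_Un[OF disjoint] by (simp add: extend_merge)
  also have "\<dots> = entropy (R \<rightarrow>\<^sub>E V) \<rho> + (\<Sum>x\<in>R \<rightarrow>\<^sub>E V. \<rho> x * ln (card (B \<rightarrow>\<^sub>E common_nbhd x P)))"
    using \<rho>(1) finite_RB(2) finite_V common_nbhd_nonempty_if_supported[OF \<rho>]
    by (intro entropy_uniform_extension)
      (auto simp: distr_on_def finite_PiE PiE_eq_empty_iff PiE_common_nbhd_subset)
  also have "\<dots> = entropy (R \<rightarrow>\<^sub>E V) \<rho> + card B * mean_log_codeg P (marginal R P \<rho>)"
    unfolding mean_log_codeg_marginal[OF finite_RB(1) parent] ln_card_PiE_common_nbhd[OF finite_RB(2)]
    by (simp add: sum_distrib_left algebra_simps)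
  finally show ?thesis .
qed

lemma marginal_extend_old:
  assumes "Q \<subseteq> R"
  shows "marginal (R \<union> B) Q (extend R B P \<rho>) = marginal R Q \<rho>"
proof
  fix w
  have "marginal (R \<union> B) Q (extend R B P \<rho>) w
      = (\<Sum>z\<in>R \<union> B \<rightarrow>\<^sub>E V. (if restrict z Q = w then 1 else 0) * extend R B P \<rho> z)"
    unfolding marginal_def by (intro sum.cong refl) simp
  also have "\<dots> = (\<Sum>x\<in>R \<rightarrow>\<^sub>E V. \<rho> x * ((if restrict x Q = w then 1 else 0)
      * sum (uniform_on (B \<rightarrow>\<^sub>E common_nbhd x P)) (B \<rightarrow>\<^sub>E V)))"
    unfolding sum_extend restrict_merge_subset(1)[OF disjoint assms] by (simp add: sum_distrib_left)
  also have "\<dots> = marginal R Q \<rho> w"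
    unfolding marginal_def using uniform_nbhd_distr
    by (intro sum.cong refl) (force simp: distr_on_def)
  finally show "marginal (R \<union> B) Q (extend R B P \<rho>) w = marginal R Q \<rho> w" .
qed

lemma marginal_extend_new:
  assumes "Q \<subseteq> B"
  shows "marginal (R \<union> B) Q (extend R B P \<rho>) = nbhd_step (marginal R P \<rho>) P Q"
proof
  fix w
  have "marginal (R \<union> B) Q (extend R B P \<rho>) w
      = (\<Sum>z\<in>R \<union> B \<rightarrow>\<^sub>E V. (if restrict z Q = w then 1 else 0) * extend R B P \<rho> z)"
    unfolding marginal_def by (intro sum.cong refl) simp
  also have "\<dots> = (\<Sum>x\<in>R \<rightarrow>\<^sub>E V. \<rho> x * (\<Sum>y\<in>B \<rightarrow>\<^sub>E V.
      if restrict y Q = w then uniform_on (B \<rightarrow>\<^sub>E common_nbhd x P) y else 0))"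
    unfolding sum_extend restrict_merge_subset(2)[OF disjoint assms]
    by (intro sum.cong refl arg_cong2[where f = "(*)"]) auto
  also have "\<dots> = (\<Sum>x\<in>R \<rightarrow>\<^sub>E V. \<rho> x * uniform_on (Q \<rightarrow>\<^sub>E common_nbhd x P) w)"
  proof (intro sum.cong refl)
    fix x assume "x \<in> R \<rightarrow>\<^sub>E V"
    then show "\<rho> x * (\<Sum>y\<in>B \<rightarrow>\<^sub>E V. if restrict y Q = w then uniform_on (B \<rightarrow>\<^sub>E common_nbhd x P) y else 0)
        = \<rho> x * uniform_on (Q \<rightarrow>\<^sub>E common_nbhd x P) w"
      using common_nbhd_nonempty_if_supported[OF \<rho>]
        marginal_uniform_on_PiE[OF assms finite_RB(2) finite_V common_nbhd_subset, of x P w]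
      by (cases "\<rho> x = 0") simp_all
  qed
  also have "\<dots> = nbhd_step (marginal R P \<rho>) P Q w"
    unfolding nbhd_step_def sum_marginal[OF finite_RB(1) parent] by (simp add: common_nbhd_restrict)
  finally show "marginal (R \<union> B) Q (extend R B P \<rho>) w = nbhd_step (marginal R P \<rho>) P Q w" .
qed

end

lemma extend_pos_restrict:
  assumes "0 < extend R B P \<rho> (restrict \<phi> (R \<union> B))" "P \<subseteq> R"
  shows "0 < \<rho> (restrict \<phi> R) \<and> preserves_edges (join_edges B P) \<phi>"
proof -
  have "restrict (restrict \<phi> (R \<union> B)) B \<in> B \<rightarrow>\<^sub>E common_nbhd \<phi> P"
    using extend_pos[OF assms(1)] assms(2) by (simp add: common_nbhd_restrict le_supI1)
  then show ?thesis
    using extend_pos[OF assms(1)] unfolding preserves_join_edges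
    by (auto simp: common_nbhd_def Int_absorb1 insert_commute)
qed

definition parents_potential_ge ::
    "real \<Rightarrow> 'i set \<Rightarrow> ('i set \<times> 'i set) list \<Rightarrow> (('i \<Rightarrow> 'v) \<Rightarrow> real) \<Rightarrow> bool" where
  "parents_potential_ge c R bs \<mu> \<longleftrightarrow> (\<forall>(B, P)\<in>set bs. P \<subseteq> R \<longrightarrow>
     codeg_supported P P (marginal R P \<mu>) \<and> c \<le> potential P (marginal R P \<mu>))"

lemma codeg_supported_of_parents:
  fixes c :: real
  assumes "block_seq R ((B, P) # bs)" "distr_on (R \<rightarrow>\<^sub>E V) \<mu>"
    and "parents_potential_ge c R ((B, P) # bs) \<mu>"
  shows "codeg_supported R P \<mu>"
  using codeg_supported_of_marginal[of R P \<mu>] assms by (auto simp: parents_potential_ge_def)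

lemma parents_potential_ge_extend:
  fixes c :: real
  assumes bs: "block_seq R ((B, P) # bs)" and \<mu>: "distr_on (R \<rightarrow>\<^sub>E V) \<mu>"
    and ge: "parents_potential_ge c R ((B, P) # bs) \<mu>"
  shows "parents_potential_ge c (R \<union> B) bs (extend R B P \<mu>)"
  unfolding parents_potential_ge_def
proof (intro ballI impI, clarify)
  fix B' P' assume "(B', P') \<in> set bs" "P' \<subseteq> R \<union> B"
  then have P': "P' \<subseteq> R \<or> (P' \<subseteq> B \<and> card P \<le> card P')"
    using bs by fastforce
  have hyps: "R \<inter> B = {}" "finite R" "finite B" "P \<subseteq> R" "P \<noteq> {}" using bs by auto
  have P: "codeg_supported P P (marginal R P \<mu>)" "c \<le> potential P (marginal R P \<mu>)"
    using ge hyps(4) by (auto simp: parents_potential_ge_def)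
  note extend_facts = hyps(1-4) \<mu> codeg_supported_of_parents[OF bs \<mu> ge]
  show "codeg_supported P' P' (marginal (R \<union> B) P' (extend R B P \<mu>))
      \<and> c \<le> potential P' (marginal (R \<union> B) P' (extend R B P \<mu>))"
  proof (cases "P' \<subseteq> R")
    case True
    then show ?thesis
      using ge \<open>(B', P') \<in> set bs\<close> marginal_extend_old[OF extend_facts True]
      by (auto simp: parents_potential_ge_def)
  next
    case False
    then have "P' \<subseteq> B" "card P \<le> card P'" using P' by auto
    moreover have "finite P" "finite P'"
      using hyps(2-4) \<open>P' \<subseteq> B\<close> by (auto intro: finite_subset)
    ultimately show ?thesis
      using marginal_extend_new[OF extend_facts \<open>P' \<subseteq> B\<close>] codeg_supported_nbhd_step[OF hyps(5)]
        potential_nbhd_step_mono[OF _ _ hyps(5) _ distr_marginal[OF hyps(2,4) \<mu>] P(1)] P(2)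
      by fastforce
  qed
qed

lemma entropy_extend_ge:
  fixes c :: real
  assumes bs: "block_seq R ((B, P) # bs)" and \<mu>: "distr_on (R \<rightarrow>\<^sub>E V) \<mu>"
    and ge: "parents_potential_ge c R ((B, P) # bs) \<mu>"
  shows "entropy (R \<rightarrow>\<^sub>E V) \<mu> + card B * ln (card V) + card B * card P * c
    \<le> entropy (R \<union> B \<rightarrow>\<^sub>E V) (extend R B P \<mu>)"
proof -
  have hyps: "R \<inter> B = {}" "finite R" "finite B" "P \<subseteq> R" "P \<noteq> {}" "finite P"
    using bs finite_subset by auto
  have "c \<le> potential P (marginal R P \<mu>)"
    using ge hyps(4) by (auto simp: parents_potential_ge_def)
  then have "card P * c \<le> card P * potential P (marginal R P \<mu>)"
    by (simp add: mult_left_mono)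
  then have "ln (card V) + card P * c \<le> mean_log_codeg P (marginal R P \<mu>)"
    using mean_log_codeg_ge_potential[OF hyps(6,5) distr_marginal[OF hyps(2,4) \<mu>]] by simp
  then have "card B * (ln (card V) + card P * c) \<le> card B * mean_log_codeg P (marginal R P \<mu>)"
    by (simp add: mult_left_mono)
  then show ?thesis
    unfolding entropy_extend[OF hyps(1-4) \<mu> codeg_supported_of_parents[OF bs \<mu> ge]]
    by (simp add: algebra_simps)
qed

lemma extend_along_blocks:
  fixes c :: real
  assumes "block_seq R bs" "distr_on (R \<rightarrow>\<^sub>E V) \<mu>" "parents_potential_ge c R bs \<mu>"
  shows "\<exists>\<mu>'. distr_on (R \<union> block_vertices bs \<rightarrow>\<^sub>E V) \<mu>' \<and>
    (\<forall>\<phi>\<in>R \<union> block_vertices bs \<rightarrow>\<^sub>E V. 0 < \<mu>' \<phi> \<longrightarrow>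
       0 < \<mu> (restrict \<phi> R) \<and> preserves_edges (block_edges bs) \<phi>) \<and>
    entropy (R \<rightarrow>\<^sub>E V) \<mu> + card (block_vertices bs) * ln (card V) + card (block_edges bs) * c
      \<le> entropy (R \<union> block_vertices bs \<rightarrow>\<^sub>E V) \<mu>'"
  using assms
proof (induction bs arbitrary: R \<mu>)
  case Nil
  then show ?case by (intro exI[of _ \<mu>]) (auto simp: preserves_edges_def)
next
  case (Cons b bs)
  obtain B P where b: "b = (B, P)" by fastforce
  note step = Cons.prems[unfolded b]
  have hyps: "R \<inter> B = {}" "finite R" "finite B" "P \<subseteq> R" and bs: "block_seq (R \<union> B) bs"
    using step(1) by auto
  obtain \<mu>' where \<mu>': "distr_on (R \<union> B \<union> block_vertices bs \<rightarrow>\<^sub>E V) \<mu>'"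
    "\<forall>\<phi>\<in>R \<union> B \<union> block_vertices bs \<rightarrow>\<^sub>E V. 0 < \<mu>' \<phi> \<longrightarrow>
       0 < extend R B P \<mu> (restrict \<phi> (R \<union> B)) \<and> preserves_edges (block_edges bs) \<phi>"
    "entropy (R \<union> B \<rightarrow>\<^sub>E V) (extend R B P \<mu>) + card (block_vertices bs) * ln (card V)
      + card (block_edges bs) * c \<le> entropy (R \<union> B \<union> block_vertices bs \<rightarrow>\<^sub>E V) \<mu>'"
    using Cons.IH[OF bs distr_extend[OF hyps step(2) codeg_supported_of_parents[OF step]]
        parents_potential_ge_extend[OF step]] by blast
  have vertices: "R \<union> block_vertices (b # bs) = R \<union> B \<union> block_vertices bs" using b by auto
  show ?case
    unfolding vertices
  proof (intro exI[of _ \<mu>'] conjI)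
    show "distr_on (R \<union> B \<union> block_vertices bs \<rightarrow>\<^sub>E V) \<mu>'" by (fact \<mu>'(1))
    show "\<forall>\<phi>\<in>R \<union> B \<union> block_vertices bs \<rightarrow>\<^sub>E V. 0 < \<mu>' \<phi> \<longrightarrow>
        0 < \<mu> (restrict \<phi> R) \<and> preserves_edges (block_edges (b # bs)) \<phi>"
      using \<mu>'(2) extend_pos_restrict[OF _ hyps(4)] b by fastforce
    show "entropy (R \<rightarrow>\<^sub>E V) \<mu> + card (block_vertices (b # bs)) * ln (card V)
        + card (block_edges (b # bs)) * c \<le> entropy (R \<union> B \<union> block_vertices bs \<rightarrow>\<^sub>E V) \<mu>'"
      using entropy_extend_ge[OF step] \<mu>'(3) card_block_vertices_Cons[OF step(1)]
        card_block_edges_Cons[OF step(1)] b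
      by (simp add: algebra_simps)
  qed
qed

section \<open>The root distribution\<close>

lemma hom_count_K2: "real (hom_count K2_V K2_E V E) = (\<Sum>x\<in>{0::nat} \<rightarrow>\<^sub>E V. codeg x {0})"
proof -
  have K2: "K2_V = {0} \<union> {1}" "{0::nat} \<inter> {1} = {}" by (auto simp: K2_V_def)
  have edge: "(\<forall>u v. {u, v} \<in> K2_E \<longrightarrow> {f u, f v} \<in> E) \<longleftrightarrow> {f 1, f 0} \<in> E" for f :: "nat \<Rightarrow> 'v"
  proof
    assume "\<forall>u v. {u, v} \<in> K2_E \<longrightarrow> {f u, f v} \<in> E"
    then show "{f 1, f 0} \<in> E" by (simp add: K2_E_def insert_commute)
  qed (auto simp: K2_E_def doubleton_eq_iff insert_commute)
  have "real (hom_count K2_V K2_E V E) = (\<Sum>f\<in>K2_V \<rightarrow>\<^sub>E V. if {f 1, f 0} \<in> E then 1 else 0)"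
    unfolding hom_count_def edge using finite_V
    by (simp add: K2_V_def finite_PiE sum.inter_filter[symmetric])
  also have "\<dots> = (\<Sum>x\<in>{0::nat} \<rightarrow>\<^sub>E V. \<Sum>y\<in>{1::nat} \<rightarrow>\<^sub>E V.
      if y \<in> {1} \<rightarrow>\<^sub>E common_nbhd x {0} then 1 else 0)"
    unfolding K2(1) sum_PiE_Un[OF K2(2)] using K2(2)
    by (intro sum.cong refl) (simp add: common_nbhd_def PiE_iff)
  also have "\<dots> = (\<Sum>x\<in>{0::nat} \<rightarrow>\<^sub>E V. codeg x {0})"
  proof (intro sum.cong refl)
    fix x :: "nat \<Rightarrow> 'v"
    have "(\<Sum>y\<in>{1::nat} \<rightarrow>\<^sub>E V. if y \<in> {1} \<rightarrow>\<^sub>E common_nbhd x {0} then 1 else 0)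
        = real (card ({1::nat} \<rightarrow>\<^sub>E common_nbhd x {0}))"
      using finite_V PiE_common_nbhd_subset[of "{1::nat}" x "{0::nat}"]
      by (simp add: sum.inter_filter[symmetric] finite_PiE Int_absorb1 flip: Int_def)
    also have "\<dots> = codeg x {0}"
      by (simp add: card_PiE codeg_def)
    finally show "(\<Sum>y\<in>{1::nat} \<rightarrow>\<^sub>E V. if y \<in> {1} \<rightarrow>\<^sub>E common_nbhd x {0} then 1 else 0) = codeg x {0}" .
  qed
  finally show ?thesis .
qed

text \<open>The endpoint of a uniformly random oriented edge, as a \<open>{0}\<close>-tuple.\<close>
definition degree_distr :: "(nat \<Rightarrow> 'v) \<Rightarrow> real" where
  "degree_distr x = codeg x {0} / hom_count K2_V K2_E V E"

lemma distr_degree_distr: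
  assumes "0 < hom_count K2_V K2_E V E"
  shows "distr_on ({0} \<rightarrow>\<^sub>E V) degree_distr"
proof -
  have "sum degree_distr ({0} \<rightarrow>\<^sub>E V) = (\<Sum>x\<in>{0::nat} \<rightarrow>\<^sub>E V. codeg x {0}) / hom_count K2_V K2_E V E"
    by (simp add: degree_distr_def sum_divide_distrib)
  then show ?thesis
    using assms unfolding distr_on_def hom_count_K2[symmetric]
    by (simp add: degree_distr_def codeg_def)
qed

lemma codeg_supported_degree_distr: "codeg_supported {0} {0} degree_distr"
  unfolding codeg_supported_def degree_distr_def codeg_def by (auto simp: zero_less_divide_iff)

lemma potential_degree_distr:
  assumes "0 < hom_count K2_V K2_E V E"
  shows "potential {0} degree_distr = ln (hom_density K2_V K2_E V E)"
proof -
  let ?M = "real (hom_count K2_V K2_E V E)"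
  have "entropy ({0::nat} \<rightarrow>\<^sub>E V) degree_distr
      = - (\<Sum>x\<in>{0::nat} \<rightarrow>\<^sub>E V. degree_distr x * ln (codeg x {0}) - degree_distr x * ln ?M)"
    unfolding entropy_def using assms
    by (intro arg_cong[where f = uminus] sum.cong refl)
      (simp add: degree_distr_def ln_div right_diff_distrib diff_divide_distrib)
  also have "\<dots> = ln ?M - mean_log_codeg {0} degree_distr"
    using distr_degree_distr[OF assms]
    by (simp add: mean_log_codeg_def distr_on_def sum_subtractf sum_distrib_right[symmetric])
  finally have "potential {0} degree_distr = ln ?M - 2 * ln (card V)"
    by (simp add: potential_def)
  also have "\<dots> = ln (hom_density K2_V K2_E V E)"
    using assms V_nonempty finite_V
    by (simp add: hom_density_def K2_V_def ln_div ln_mult)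
  finally show ?thesis .
qed

definition root_distr :: "'i set \<Rightarrow> ('i \<Rightarrow> 'v) \<Rightarrow> real" where
  "root_distr R = nbhd_step degree_distr {0} R"

context
  assumes K2_pos: "0 < hom_count K2_V K2_E V E"
begin

lemma distr_root_distr: "finite R \<Longrightarrow> distr_on (R \<rightarrow>\<^sub>E V) (root_distr R)"
  unfolding root_distr_def
  using distr_nbhd_step[OF _ _ distr_degree_distr[OF K2_pos] codeg_supported_degree_distr] by simp

lemma marginal_root_distr: "finite R \<Longrightarrow> Q \<subseteq> R \<Longrightarrow> marginal R Q (root_distr R) = root_distr Q"
  unfolding root_distr_def
  using marginal_nbhd_step[OF _ _ distr_degree_distr[OF K2_pos] codeg_supported_degree_distr] .

lemma potential_root_distr:
  assumes "finite Q" "Q \<noteq> {}"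
  shows "codeg_supported Q Q (root_distr Q)
    \<and> ln (hom_density K2_V K2_E V E) \<le> potential Q (root_distr Q)"
  using codeg_supported_nbhd_step[where P = "{0::nat}"]
    potential_nbhd_step_mono[OF _ assms(1) _ _ distr_degree_distr[OF K2_pos] codeg_supported_degree_distr]
    assms potential_degree_distr[OF K2_pos]
  unfolding root_distr_def by (auto simp: Suc_le_eq card_gt_0_iff)

lemma parents_potential_ge_root:
  assumes "block_seq R bs"
  shows "parents_potential_ge (ln (hom_density K2_V K2_E V E)) R bs (root_distr R)"
  unfolding parents_potential_ge_def
proof (intro ballI impI, clarify)
  fix B P assume "(B, P) \<in> set bs" "P \<subseteq> R"
  moreover have "finite R" using assms by (cases bs) auto
  ultimately show "codeg_supported P P (marginal R P (root_distr R))
      \<and> ln (hom_density K2_V K2_E V E) \<le> potential P (marginal R P (root_distr R))"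
    using potential_root_distr[of P] marginal_root_distr[of R P] block_seq_parents_nonempty[OF assms]
    by (auto intro: finite_subset)
qed

lemma entropy_extend_root:
  assumes "finite R" "R \<noteq> {}" "finite B" "R \<inter> B = {}" "card R \<le> card B"
  shows "(card R + card B) * ln (card V) + card R * card B * ln (hom_density K2_V K2_E V E)
    \<le> entropy (R \<union> B \<rightarrow>\<^sub>E V) (extend R B R (root_distr R))"
proof -
  have \<rho>: "distr_on (R \<rightarrow>\<^sub>E V) (root_distr R)"
    and supp: "codeg_supported R R (root_distr R)"
    and pot: "ln (hom_density K2_V K2_E V E) \<le> potential R (root_distr R)"
    using distr_root_distr potential_root_distr assms(1,2) by auto
  have "entropy (R \<union> B \<rightarrow>\<^sub>E V) (extend R B R (root_distr R))
      = entropy (R \<rightarrow>\<^sub>E V) (root_distr R) + card B * mean_log_codeg R (root_distr R)"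
    using entropy_extend[OF assms(4,1,3) order_refl \<rho> supp] marginal_root_distr[OF assms(1) order_refl]
    by simp
  moreover have "0 < real (card R)" using assms(1,2) by (simp add: card_gt_0_iff)
  ultimately show ?thesis
    using pot entropy_tuples_le[OF assms(1) \<rho>] assms(5)
    by (simp add: potential_def root_block_arith)
qed

lemma entropy_hom_distr_block_graph:
  assumes bs: "block_seq R ((B, R) # bs)" and "R \<noteq> {}" "card R \<le> card B"
  defines "VH \<equiv> R \<union> block_vertices ((B, R) # bs)" and "EH \<equiv> block_edges ((B, R) # bs)"
  shows "\<exists>\<mu>. distr_on (VH \<rightarrow>\<^sub>E V) \<mu> \<and> (\<forall>\<phi>\<in>VH \<rightarrow>\<^sub>E V. 0 < \<mu> \<phi> \<longrightarrow> preserves_edges EH \<phi>) \<and>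
    card VH * ln (card V) + card EH * ln (hom_density K2_V K2_E V E) \<le> entropy (VH \<rightarrow>\<^sub>E V) \<mu>"
proof -
  let ?c = "ln (hom_density K2_V K2_E V E)"
  have hyps: "finite R" "finite B" "R \<inter> B = {}" and rest: "block_seq (R \<union> B) bs"
    using bs by auto
  define \<mu>\<^sub>1 where "\<mu>\<^sub>1 = extend R B R (root_distr R)"
  note extend_facts = hyps(3,1,2) order_refl distr_root_distr[OF hyps(1)]
    potential_root_distr[OF hyps(1) assms(2), THEN conjunct1]
  obtain \<mu>' where \<mu>': "distr_on (R \<union> B \<union> block_vertices bs \<rightarrow>\<^sub>E V) \<mu>'"
    "\<forall>\<phi>\<in>R \<union> B \<union> block_vertices bs \<rightarrow>\<^sub>E V. 0 < \<mu>' \<phi> \<longrightarrow>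
       0 < \<mu>\<^sub>1 (restrict \<phi> (R \<union> B)) \<and> preserves_edges (block_edges bs) \<phi>"
    "entropy (R \<union> B \<rightarrow>\<^sub>E V) \<mu>\<^sub>1 + card (block_vertices bs) * ln (card V) + card (block_edges bs) * ?c
      \<le> entropy (R \<union> B \<union> block_vertices bs \<rightarrow>\<^sub>E V) \<mu>'"
    using extend_along_blocks[OF rest distr_extend[OF extend_facts]
        parents_potential_ge_extend[OF bs distr_root_distr[OF hyps(1)] parents_potential_ge_root[OF bs]]]
    unfolding \<mu>\<^sub>1_def by blast
  have VH: "VH = R \<union> B \<union> block_vertices bs" unfolding VH_def by auto
  have "card VH = card R + card B + card (block_vertices bs)"
    unfolding VH_def using card_block_vertices_Cons[OF bs] block_vertices_disjoint[OF bs] hyps(1)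
    by (simp add: card_Un_disjoint del: block_vertices.simps)
  then have "card VH * ln (card V) + card EH * ?c \<le> entropy (VH \<rightarrow>\<^sub>E V) \<mu>'"
    using entropy_extend_root[OF hyps(1) assms(2) hyps(2,3) assms(3), folded \<mu>\<^sub>1_def]
      card_block_edges_Cons[OF bs] \<mu>'(3)
    unfolding VH EH_def by (simp add: algebra_simps)
  moreover have "\<forall>\<phi>\<in>VH \<rightarrow>\<^sub>E V. 0 < \<mu>' \<phi> \<longrightarrow> preserves_edges EH \<phi>"
    using \<mu>'(2) extend_pos_restrict[OF _ order_refl] unfolding VH EH_def \<mu>\<^sub>1_def by fastforce
  ultimately show ?thesis
    using \<mu>'(1) unfolding VH by blast
qed

end

theorem hom_density_block_graph_ge:
  assumes bs: "block_seq R ((B, R) # bs)" and "R \<noteq> {}" "card R \<le> card B"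
  shows "hom_density K2_V K2_E V E ^ card (block_edges ((B, R) # bs))
    \<le> hom_density (R \<union> block_vertices ((B, R) # bs)) (block_edges ((B, R) # bs)) V E"
proof (cases "hom_count K2_V K2_E V E = 0")
  case True
  have "0 < card R" using bs assms(2) by (simp add: card_gt_0_iff)
  then have "0 < card (block_edges ((B, R) # bs))"
    using card_block_edges_Cons[OF bs] assms(3) by simp
  then show ?thesis
    using True by (simp add: hom_density_def zero_power)
next
  case False
  then obtain \<mu> where \<mu>: "distr_on (R \<union> block_vertices ((B, R) # bs) \<rightarrow>\<^sub>E V) \<mu>"
    "\<forall>\<phi>\<in>R \<union> block_vertices ((B, R) # bs) \<rightarrow>\<^sub>E V. 0 < \<mu> \<phi> \<longrightarrow> preserves_edges (block_edges ((B, R) # bs)) \<phi>"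
    "card (R \<union> block_vertices ((B, R) # bs)) * ln (card V)
      + card (block_edges ((B, R) # bs)) * ln (hom_density K2_V K2_E V E)
      \<le> entropy (R \<union> block_vertices ((B, R) # bs) \<rightarrow>\<^sub>E V) \<mu>"
    using entropy_hom_distr_block_graph[OF _ assms] by blast
  have "0 < hom_density K2_V K2_E V E"
    using False finite_V V_nonempty by (simp add: hom_density_def card_gt_0_iff)
  moreover have "finite (R \<union> block_vertices ((B, R) # bs))"
    using bs block_vertices_disjoint[OF bs] by simp
  ultimately show ?thesis
    using hom_density_ge_if_entropy_ge \<mu> by blast
qed

end

section \<open>Tree-degenerate graphs\<close>

lemma block_vertices_eq: "block_vertices bs = (\<Union>(B, P)\<in>set bs. B)"
  by (induction bs rule: block_vertices.induct) auto

lemma block_edges_eq: "block_edges bs = (\<Union>(B, P)\<in>set bs. join_edges B P)"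
  by (induction bs rule: block_edges.induct) auto

lemma join_edges_commute: "join_edges A B = join_edges B A"
  unfolding join_edges_def by (auto simp: insert_commute)

context
  fixes m :: nat and B P :: "nat \<Rightarrow> 'a set" and \<gamma> :: "nat \<Rightarrow> nat"
  assumes finite_B: "\<And>i. i \<le> m \<Longrightarrow> finite (B i)"
    and B_nonempty: "\<forall>i\<le>m. B i \<noteq> {}"
    and B_disjoint: "\<forall>i\<le>m. \<forall>j\<le>m. i \<noteq> j \<longrightarrow> B i \<inter> B j = {}"
    and P_first: "P 1 = B 0"
    and P_later: "\<forall>i. 2 \<le> i \<and> i \<le> m \<longrightarrow>
      1 \<le> \<gamma> i \<and> \<gamma> i \<le> i - 1 \<and> P i \<subseteq> B (\<gamma> i) \<and> card (P (\<gamma> i)) \<le> card (P i)"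
begin

lemma P_later_facts:
  "2 \<le> i \<Longrightarrow> i \<le> m \<Longrightarrow> 1 \<le> \<gamma> i \<and> \<gamma> i < i \<and> P i \<subseteq> B (\<gamma> i) \<and> card (P (\<gamma> i)) \<le> card (P i)"
  using P_later by fastforce

lemma card_P_pos: "1 \<le> i \<Longrightarrow> i \<le> m \<Longrightarrow> 0 < card (P i)"
proof (induction i rule: less_induct)
  case (less i)
  show ?case
  proof (cases "i = 1")
    case True
    then show ?thesis using P_first B_nonempty finite_B[of 0] by (simp add: card_gt_0_iff)
  next
    case False
    then show ?thesis using less P_later_facts[of i] by fastforce
  qed
qed

lemma parent_index_le:
  assumes "2 \<le> i" "i \<le> m" "P i \<subseteq> (\<Union>l\<le>k. B l)"
  shows "\<gamma> i \<le> k"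
proof (rule ccontr)
  assume "\<not> \<gamma> i \<le> k"
  then have "B (\<gamma> i) \<inter> B l = {}" if "l \<le> k" for l
    using B_disjoint P_later_facts[OF assms(1,2)] assms(2) that by auto
  then have "P i = {}" using P_later_facts[OF assms(1,2)] assms(3) by blast
  then show False using card_P_pos[of i] assms(1,2) by auto
qed

lemma block_seq_blocks:
  "1 \<le> k \<Longrightarrow> k \<le> Suc m \<Longrightarrow> block_seq (\<Union>l<k. B l) (map (\<lambda>i. (B i, P i)) [k..<Suc m])"
proof (induction "Suc m - k" arbitrary: k)
  case 0
  then show ?case using finite_B by (auto simp: less_Suc_eq_le)
next
  case (Suc d)
  let ?R = "\<Union>l<k. B l"
  have "k \<le> m" using Suc by simp
  have R_Suc: "(\<Union>l<Suc k. B l) = ?R \<union> B k" by (auto simp: lessThan_Suc)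
  have IH: "block_seq (?R \<union> B k) (map (\<lambda>i. (B i, P i)) [Suc k..<Suc m])"
    using Suc.hyps(1)[of "Suc k"] Suc.hyps(2) Suc.prems unfolding R_Suc by simp
  have "finite ?R" using finite_B \<open>k \<le> m\<close> by auto
  moreover have "?R \<inter> B k = {}"
  proof -
    have "B l \<inter> B k = {}" if "l < k" for l using B_disjoint \<open>k \<le> m\<close> that by simp
    then show ?thesis by blast
  qed
  moreover have "P k \<noteq> {}" using card_P_pos[of k] Suc.prems(1) \<open>k \<le> m\<close> by auto
  moreover have "P k \<subseteq> ?R"
  proof (cases "k = 1")
    case True
    then show ?thesis using P_first by auto
  next
    case False
    then show ?thesis using P_later_facts[of k] Suc.prems(1) \<open>k \<le> m\<close> by force
  qed
  moreover have "P i \<subseteq> ?R \<or> P i \<subseteq> B k \<and> card (P k) \<le> card (P i)"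
    if "k < i" "i \<le> m" "P i \<subseteq> ?R \<union> B k" for i
  proof -
    have "P i \<subseteq> (\<Union>l\<le>k. B l)" using that(3) R_Suc by (simp add: lessThan_Suc_atMost)
    then have "\<gamma> i \<le> k" using parent_index_le[of i k] that Suc.prems(1) by simp
    then show ?thesis
      using P_later_facts[of i] that Suc.prems(1) by (cases "\<gamma> i = k") auto
  qed
  ultimately show ?case
    using IH finite_B[OF \<open>k \<le> m\<close>] \<open>k \<le> m\<close> by (simp add: upt_conv_Cons del: upt_Suc)
qed

lemma block_seq_from_B0:
  "1 \<le> m \<Longrightarrow> block_seq (B 0) ((B 1, B 0) # map (\<lambda>i. (B i, P i)) [2..<Suc m])"
  using block_seq_blocks[of 1] P_first
  by (simp add: lessThan_Suc upt_conv_Cons numeral_2_eq_2 del: upt_Suc)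

lemma single_join_if_card_B1_lt:
  assumes "1 \<le> m" "card (B 1) < card (B 0)"
  shows "m = 1"
proof (rule ccontr)
  assume "m \<noteq> 1"
  then have "P 2 \<subseteq> B (\<gamma> 2)" "\<gamma> 2 = 1" "card (P (\<gamma> 2)) \<le> card (P 2)"
    using assms(1) P_later_facts[of 2] by auto
  moreover have "card (P 2) \<le> card (B 1)"
    using card_mono[OF finite_B[of 1]] assms(1) calculation(1,2) by simp
  ultimately show False using assms(2) P_first by simp
qed

end

lemma tree_degenerate_block_seq:
  assumes "finite VH" "tree_degenerate VH EH"
  shows "\<exists>R B bs. block_seq R ((B, R) # bs) \<and> R \<noteq> {} \<and> card R \<le> card B \<and>
    VH = R \<union> block_vertices ((B, R) # bs) \<and> EH = block_edges ((B, R) # bs)"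
proof -
  obtain m :: nat and B P :: "nat \<Rightarrow> 'a set" and \<gamma> :: "nat \<Rightarrow> nat"
    where m: "1 \<le> m"
      and B: "\<forall>i\<le>m. B i \<noteq> {}" "\<forall>i\<le>m. \<forall>j\<le>m. i \<noteq> j \<longrightarrow> B i \<inter> B j = {}"
        "(\<Union>i\<le>m. B i) = VH"
      and P: "P 1 = B 0" "\<forall>i. 2 \<le> i \<and> i \<le> m \<longrightarrow>
        1 \<le> \<gamma> i \<and> \<gamma> i \<le> i - 1 \<and> P i \<subseteq> B (\<gamma> i) \<and> card (P (\<gamma> i)) \<le> card (P i)"
      and EH: "EH = (\<Union>i\<in>{1..m}. join_edges (B i) (P i))"
    using assms(2) unfolding tree_degenerate_def by blast
  have finite_B: "finite (B i)" if "i \<le> m" for i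
    using B(3) assms(1) that by (metis UN_upper atMost_iff finite_subset)
  have "{..m} = insert 0 {1..m}" by auto
  then have VH: "VH = B 0 \<union> (\<Union>i\<in>{1..m}. B i)"
    using B(3) by simp
  show ?thesis
  proof (cases "card (B 0) \<le> card (B 1)")
    case True
    define bs where "bs = map (\<lambda>i. (B i, P i)) [2..<Suc m]"
    have "(B 1, B 0) # bs = map (\<lambda>i. (B i, P i)) [1..<Suc m]"
      unfolding bs_def using m P(1) by (simp add: upt_conv_Cons numeral_2_eq_2 del: upt_Suc)
    then have "set ((B 1, B 0) # bs) = (\<lambda>i. (B i, P i)) ` {1..m}"
      by (simp only: list.set_map set_upt atLeastLessThanSuc_atLeastAtMost)
    then have "VH = B 0 \<union> block_vertices ((B 1, B 0) # bs)" "EH = block_edges ((B 1, B 0) # bs)"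
      unfolding block_vertices_eq block_edges_eq VH EH by auto
    then show ?thesis
      using block_seq_from_B0[OF finite_B B(1,2) P m, folded bs_def] True B(1)
      by (intro exI[of _ "B 0"] exI[of _ "B 1"] exI[of _ bs]) simp
  next
    case False
    \<comment> \<open>The root has to be the smaller side of the first join, and then \<open>H\<close> is just this join.\<close>
    then have "m = 1" using single_join_if_card_B1_lt[OF finite_B B(1,2) P m] by simp
    have "B 1 \<inter> B 0 = {}" "B 1 \<noteq> {}" using B(1,2) m by auto
    then have "block_seq (B 1) [(B 0, B 1)]"
      using finite_B m by simp
    moreover have "VH = B 1 \<union> block_vertices [(B 0, B 1)]"
      using VH \<open>m = 1\<close> by auto
    moreover have "EH = block_edges [(B 0, B 1)]"
      using EH P(1) \<open>m = 1\<close> join_edges_commute[of "B 1" "B 0"] by simp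
    ultimately show ?thesis
      using False \<open>B 1 \<noteq> {}\<close> by (intro exI[of _ "B 1"] exI[of _ "B 0"] exI[of _ "[]"]) simp
  qed
qed

theorem corollary1p10:
  fixes VH :: "'a set" and EH :: "'a set set" and VG :: "'b set" and EG :: "'b set set"
  assumes "simple_graph VH EH" and "tree_degenerate VH EH"
    and "simple_graph VG EG" and "VG \<noteq> {}"
  shows "hom_density VH EH VG EG \<ge> (hom_density K2_V K2_E VG EG) ^ card EH"
proof -
  interpret host_graph VG EG
    using assms(3,4) by unfold_locales (simp_all add: simple_graph_def)
  have "finite VH" using assms(1) by (simp add: simple_graph_def)
  then obtain R B bs where blocks: "block_seq R ((B, R) # bs)" "R \<noteq> {}" "card R \<le> card B"
    and VH: "VH = R \<union> block_vertices ((B, R) # bs)" and EH: "EH = block_edges ((B, R) # bs)"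
    using tree_degenerate_block_seq assms(2) by blast
  show ?thesis
    unfolding VH EH by (rule hom_density_block_graph_ge[OF blocks])
qed

end
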